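(* Let $\mathcal O$ be the $G_0$-orbit of a point $z_0\in\mathfrak g^*\setminus\mathrm{Sing}\,\mathfrak g^*$. Let $U\subset\mathfrak g^*\setminus\mathrm{Sing}\,\mathfrak g^*$ be an open neighbourhood of $z_0$, and let $g_1,\dots,g_r$, with $r=\operatorname{rank}\mathfrak g$, be holomorphic functions on $U$ with $c(g_m)=0$ whose differentials are linearly independent at every point of $U$. Then, at every point of $\mathcal O\cap U$, $T^{1,0}\mathcal O$ is spanned by the vector fields $c(\tilde g_1),\dots,c(\tilde g_r)$, where $\tilde g_m(z)=\sum_i\overline{\frac{\partial g_m}{\partial z_i}(z)}\,z_i$.
   Context: Setting. $\mathfrak g_0$ is a finite-dimensional nonabelian real Lie algebra and $\mathfrak g=\mathfrak g_0^{\mathbb C}$, with $n=\dim_{\mathbb C}\mathfrak g$. Fix a basis of $\mathfrak g_0$ with real structure constants $c_{ij}^k$; $z_k$ are the complex linear coordinates on $\mathfrak g^*$. $G_0$ is the connected real Lie group with Lie algebra $\mathfrak g_0$, acting by the coadjoint action. Bivector and Hamiltonian fields. $c=c_{ij}^kz_k\partial_{z_i}\wedge\partial_{z_j}$, and for a smooth complex function $f$, $c(f)=c_{ij}^kz_k\frac{\partial f}{\partial z_i}\partial_{z_j}$. Singular set and rank. $\mathrm{Sing}\,\mathfrak g^*$ is the set where $(c_{ij}^kz_k)$ has non-maximal rank, and $\operatorname{rank}\mathfrak g=n-\max_z\operatorname{rank}(c_{ij}^kz_k)$. $T^{1,0}\mathcal O=T^{\mathbb C}\mathcal O\cap T^{1,0}\mathfrak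 g^*$. *)

theory Defs
  imports "HOL-Analysis.Analysis"
begin

text \<open>A real Lie algebra g0 of dimension n = CARD('n) is given by real structure
  constants c i j k (= c_ij^k, i.e. [e_i,e_j] = sum_k c_ij^k e_k) w.r.t. a fixed basis
  indexed by the finite type 'n. Points of g* = (g0^C)* are z :: complex^'n, z $ k = z_k.\<close>

definition lie_structure_constants :: "('n::finite \<Rightarrow> 'n \<Rightarrow> 'n \<Rightarrow> real) \<Rightarrow> bool" where
  "lie_structure_constants c \<longleftrightarrow>
     (\<forall>i j k. c i j k = - c j i k) \<and>
     (\<forall>i j k m. (\<Sum>l\<in>UNIV. c i j l * c l k m + c j k l * c l i m + c k i l * c l j m) = 0)"

definition nonabelian :: "('n::finite \<Rightarrow> 'n \<Rightarrow> 'n \<Rightarrow> real) \<Rightarrow> bool" where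
  "nonabelian c \<longleftrightarrow> (\<exists>i j k. c i j k \<noteq> 0)"

definition poisson_matrix :: "('n::finite \<Rightarrow> 'n \<Rightarrow> 'n \<Rightarrow> real) \<Rightarrow> complex^'n \<Rightarrow> complex^'n^'n" where
  "poisson_matrix c z = (\<chi> i j. \<Sum>k\<in>UNIV. complex_of_real (c i j k) * z $ k)"

definition max_rank :: "('n::finite \<Rightarrow> 'n \<Rightarrow> 'n \<Rightarrow> real) \<Rightarrow> nat" where
  "max_rank c = Max {rank (poisson_matrix c z) | z. True}"

definition Sing :: "('n::finite \<Rightarrow> 'n \<Rightarrow> 'n \<Rightarrow> real) \<Rightarrow> (complex^'n) set" where
  "Sing c = {z. rank (poisson_matrix c z) < max_rank c}"

definition lie_rank :: "('n::finite \<Rightarrow> 'n \<Rightarrow> 'n \<Rightarrow> real) \<Rightarrow> nat" where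
  "lie_rank c = CARD('n) - max_rank c"

text \<open>Infinitesimal (complexified) coadjoint action of X = sum_i X_i e_i in g0 on g*:
  (ad*_X z)(e_j) = - z([X,e_j]).\<close>
definition coad :: "('n::finite \<Rightarrow> 'n \<Rightarrow> 'n \<Rightarrow> real) \<Rightarrow> real^'n \<Rightarrow> complex^'n \<Rightarrow> complex^'n" where
  "coad c X z = (\<chi> j. - (\<Sum>i\<in>UNIV. \<Sum>k\<in>UNIV. complex_of_real (X $ i * c i j k) * z $ k))"

definition lin_exp :: "(complex^'n \<Rightarrow> complex^'n) \<Rightarrow> complex^'n \<Rightarrow> complex^'n" where
  "lin_exp A v = (\<Sum>k. (1 / fact k) *\<^sub>R (A ^^ k) v)"

text \<open>The G0-orbit of z0 for the connected group G0: G0 is generated by exp(g0) and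
  Ad*(exp X) = exp(ad* X), so the orbit consists of the images of z0 under finite
  products of exp(ad*_X), X in g0.\<close>
definition coadjoint_orbit :: "('n::finite \<Rightarrow> 'n \<Rightarrow> 'n \<Rightarrow> real) \<Rightarrow> complex^'n \<Rightarrow> (complex^'n) set" where
  "coadjoint_orbit c z0 = {fold (\<lambda>X v. lin_exp (coad c X) v) Xs z0 | Xs. True}"

text \<open>Real tangent space of the orbit at z: image of the infinitesimal action g0 -> T_z g*
  (the differential at the identity of the orbit map), as real vectors in C^n = R^2n.\<close>
definition orbit_tangent :: "('n::finite \<Rightarrow> 'n \<Rightarrow> 'n \<Rightarrow> real) \<Rightarrow> complex^'n \<Rightarrow> (complex^'n) set" where
  "orbit_tangent c z = {coad c X z | X. True}"

definition cnj_vec :: "complex^'n \<Rightarrow> complex^'n" where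
  "cnj_vec w = (\<chi> j. cnj (w $ j))"

text \<open>Complexification of a real subspace S of C^n = R^2n, inside the complexified tangent
  space, where (a,b) stands for sum_j a_j d/dz_j + b_j d/dzbar_j; a real vector w
  corresponds to (w, conj w).\<close>
definition complexified :: "(complex^'n) set \<Rightarrow> ((complex^'n) \<times> (complex^'n)) set" where
  "complexified S = {(\<Sum>l<k. a l *s w l, \<Sum>l<k. a l *s cnj_vec (w l)) |
                       k (a :: nat \<Rightarrow> complex) (w :: nat \<Rightarrow> complex^'n). \<forall>l<k. w l \<in> S}"

text \<open>T^{1,0}O at z = T^C O \<inter> T^{1,0} g*, with (1,0)-vectors sum_j a_j d/dz_j written as a.\<close>
definition T10_orbit :: "('n::finite \<Rightarrow> 'n \<Rightarrow> 'n \<Rightarrow> real) \<Rightarrow> complex^'n \<Rightarrow> (complex^'n) set" where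
  "T10_orbit c z = {a. (a, 0) \<in> complexified (orbit_tangent c z)}"

definition holo_on :: "(complex^'n \<Rightarrow> complex) \<Rightarrow> (complex^'n) set \<Rightarrow> bool" where
  "holo_on f U \<longleftrightarrow> (\<forall>z\<in>U. \<exists>L. (f has_derivative L) (at z) \<and> (\<forall>(s::complex) v. L (s *s v) = s * L v))"

definition dx :: "(complex^'n \<Rightarrow> complex) \<Rightarrow> 'n \<Rightarrow> complex^'n \<Rightarrow> complex" where
  "dx f i z = vector_derivative (\<lambda>t::real. f (z + t *\<^sub>R axis i 1)) (at 0)"

definition dy :: "(complex^'n \<Rightarrow> complex) \<Rightarrow> 'n \<Rightarrow> complex^'n \<Rightarrow> complex" where
  "dy f i z = vector_derivative (\<lambda>t::real. f (z + t *\<^sub>R axis i \<i>)) (at 0)"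

definition wirtinger :: "(complex^'n \<Rightarrow> complex) \<Rightarrow> 'n \<Rightarrow> complex^'n \<Rightarrow> complex" where
  "wirtinger f i z = (dx f i z - \<i> * dy f i z) / 2"

text \<open>The (1,0) vector field c(f) = c_ij^k z_k (df/dz_i) d/dz_j, as component vector.\<close>
definition hamfield :: "('n::finite \<Rightarrow> 'n \<Rightarrow> 'n \<Rightarrow> real) \<Rightarrow> (complex^'n \<Rightarrow> complex) \<Rightarrow> complex^'n \<Rightarrow> complex^'n" where
  "hamfield c f z = (\<chi> j. \<Sum>i\<in>UNIV. \<Sum>k\<in>UNIV. complex_of_real (c i j k) * z $ k * wirtinger f i z)"

definition tilde :: "(complex^'n \<Rightarrow> complex) \<Rightarrow> complex^'n \<Rightarrow> complex" where
  "tilde g z = (\<Sum>i\<in>UNIV. cnj (wirtinger g i z) * z $ i)"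

end

(*
  Let P = (c_ij^k z_k) at a point z of O inside U. The real tangent space of the orbit is
  {X P : X real}, so a (1,0)-vector a lies in its complexification iff a = Y P with
  Y conj(P) = 0, i.e. iff a = conj(u) P for some u in the left kernel of P. As z is regular,
  rank P is maximal and this kernel has dimension at most r; the complex gradients of the g_m
  lie in it (this is c(g_m) = 0) and are independent, so they form a basis of it. Finally the
  complex gradient of g~_m is the conjugate of that of g_m: the partial derivatives of g_m are
  again holomorphic (by the Cauchy integral formula in two variables), so the coefficients of
  g~_m are antiholomorphic. Hence T^{1,0}O = {conj(u) P} is spanned by the c(g~_m).
*)

theory Submission
  imports Defs "HOL-Complex_Analysis.Complex_Analysis"
begin

section \<open>Separately holomorphic functions of two variables\<close>

(* Since the derivative of circlepath 0 r is 2 pi i times circlepath 0 r, the Cauchy formula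
   deriv f x = (2 pi i)^-1 * contour integral of f u / (u - x)^2 becomes an integral over [0,1]
   against this kernel. *)
definition circle_deriv_kernel :: "real \<Rightarrow> complex \<Rightarrow> real \<Rightarrow> complex" where
  "circle_deriv_kernel r x s = circlepath 0 r s / (circlepath 0 r s - x)\<^sup>2"

lemma norm_circlepath_0: "norm (circlepath 0 r s) = \<bar>r\<bar>"
  by (simp add: circlepath norm_mult)

lemma deriv_eq_circle_integral:
  fixes f :: "complex \<Rightarrow> complex"
  assumes f: "f holomorphic_on ball 0 R" and r: "r < R" and x: "norm x < r"
  shows "deriv f x = integral {0..1} (\<lambda>s. f (circlepath 0 r s) * circle_deriv_kernel r x s)"
proof -
  have "cball 0 r \<subseteq> ball (0::complex) R" using r by auto
  with f have "continuous_on (cball 0 r) f" "f holomorphic_on ball 0 r"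
    by (meson holomorphic_on_imp_continuous_on continuous_on_subset,
        meson ball_subset_cball holomorphic_on_subset subset_trans)
  from Cauchy_has_contour_integral_higher_derivative_circlepath[OF this, of x 1]
  have "((\<lambda>u. f u / (u - x)\<^sup>2) has_contour_integral 2 * pi * \<i> * deriv f x) (circlepath 0 r)"
    using x by (simp add: power2_eq_square)
  then have "((\<lambda>s. f (circlepath 0 r s) * circle_deriv_kernel r x s * (2 * pi * \<i>))
      has_integral 2 * pi * \<i> * deriv f x) {0..1}"
    unfolding has_contour_integral_def
    by (rule has_integral_eq[rotated])
      (simp add: vector_derivative_circlepath01, simp add: circle_deriv_kernel_def circlepath)
  from has_integral_mult_left[OF this, of "1 / (2 * pi * \<i>)"] show ?thesis
    by (simp add: integral_unique)
qed

lemma continuous_on_circle_deriv_kernel: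
  assumes "continuous_on S f" "continuous_on S g" "\<And>q. q \<in> S \<Longrightarrow> norm (f q) < r"
  shows "continuous_on S (\<lambda>q. circle_deriv_kernel r (f q) (g q))"
proof -
  have "circlepath 0 r (g q) - f q \<noteq> 0" if "q \<in> S" for q
    using assms(3)[OF that] norm_circlepath_0[of r "g q"] by auto
  then show ?thesis
    unfolding circle_deriv_kernel_def circlepath by (intro continuous_intros assms) auto
qed

lemma continuous_on_deriv_along_circlepath:
  fixes F :: "complex \<Rightarrow> complex \<Rightarrow> complex"
  assumes cont: "continuous_on (ball 0 R \<times> ball 0 R) (\<lambda>(x, y). F x y)"
    and hol_fst: "\<And>y. y \<in> ball 0 R \<Longrightarrow> (\<lambda>x. F x y) holomorphic_on ball 0 R"
    and r: "0 < r" "r < R"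
  shows "continuous_on (ball 0 r \<times> cbox 0 1) (\<lambda>(x, t). deriv (\<lambda>w. F w (circlepath 0 r t)) x)"
proof -
  let ?\<gamma> = "circlepath 0 r" and ?I = "cbox 0 (1::real)"
  have \<gamma>_in: "?\<gamma> s \<in> ball 0 R" for s using r by (simp add: norm_circlepath_0)
  have deriv_fst: "deriv (\<lambda>w. F w (?\<gamma> t)) x
      = integral ?I (\<lambda>s. F (?\<gamma> s) (?\<gamma> t) * circle_deriv_kernel r x s)"
    if "x \<in> ball 0 r" for x t
    using deriv_eq_circle_integral[OF hol_fst[OF \<gamma>_in] r(2)] that by (simp add: cbox_interval)
  have cont_F: "continuous_on ((ball 0 r \<times> ?I) \<times> ?I)
      (\<lambda>q. (\<lambda>(x, y). F x y) (?\<gamma> (snd q), ?\<gamma> (snd (fst q))))"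
    by (rule continuous_on_compose2[OF cont])
      (use \<gamma>_in in \<open>auto simp del: mem_ball simp: circlepath intro!: continuous_intros\<close>)
  have cont_kernel: "continuous_on ((ball 0 r \<times> ?I) \<times> ?I)
      (\<lambda>q. circle_deriv_kernel r (fst (fst q)) (snd q))"
    by (rule continuous_on_circle_deriv_kernel) (auto intro!: continuous_intros)
  have "continuous_on (ball 0 r \<times> ?I)
      (\<lambda>p. integral ?I (\<lambda>s. F (?\<gamma> s) (?\<gamma> (snd p)) * circle_deriv_kernel r (fst p) s))"
    by (rule integral_continuous_on_param)
      (use continuous_on_mult[OF cont_F cont_kernel] in \<open>simp add: split_beta\<close>)
  then show ?thesis
    by (rule continuous_on_eq) (auto simp: deriv_fst)
qed

lemma holomorphic_on_deriv_of_separately_holomorphic: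
  fixes F :: "complex \<Rightarrow> complex \<Rightarrow> complex"
  assumes R: "0 < R"
    and cont: "continuous_on (ball 0 R \<times> ball 0 R) (\<lambda>(x, y). F x y)"
    and hol_snd: "\<And>x. x \<in> ball 0 R \<Longrightarrow> F x holomorphic_on ball 0 R"
    and hol_fst: "\<And>y. y \<in> ball 0 R \<Longrightarrow> (\<lambda>x. F x y) holomorphic_on ball 0 R"
  shows "(\<lambda>x. deriv (F x) 0) holomorphic_on ball 0 (R/2)"
proof -
  define r where "r = R/2"
  let ?\<gamma> = "circlepath 0 r" and ?I = "cbox 0 (1::real)"
  have r: "0 < r" "r < R" using R by (auto simp: r_def)
  have \<gamma>_in: "?\<gamma> s \<in> ball 0 R" for s using r by (simp add: norm_circlepath_0)
  \<comment> \<open>Differentiate the Cauchy integral for deriv (F x) 0 under the integral sign.\<close>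
  have deriv_snd: "deriv (F x) 0 = integral ?I (\<lambda>t. F x (?\<gamma> t) * circle_deriv_kernel r 0 t)"
    if "x \<in> ball 0 r" for x
    using deriv_eq_circle_integral[OF hol_snd r(2)] that r by (simp add: cbox_interval)
  have cont_kernel0: "continuous_on (ball 0 r \<times> ?I) (\<lambda>q. circle_deriv_kernel r 0 (snd q))"
    by (rule continuous_on_circle_deriv_kernel) (auto simp: r intro!: continuous_intros)
  have "continuous_on (ball 0 r \<times> ?I)
      (\<lambda>(x, t). deriv (\<lambda>w. F w (?\<gamma> t)) x * circle_deriv_kernel r 0 t)"
    using continuous_on_mult[OF continuous_on_deriv_along_circlepath[OF cont hol_fst r,
          unfolded split_beta] cont_kernel0]
    by (simp add: split_beta)
  then have "(\<lambda>x. integral ?I (\<lambda>t. F x (?\<gamma> t) * circle_deriv_kernel r 0 t)) holomorphic_on ball 0 r"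
  proof (rule leibniz_rule_holomorphic[rotated 2])
    fix x :: complex and t assume x: "x \<in> ball 0 r" and "t \<in> ?I"
    have "x \<in> ball 0 R" using x r by auto
    then show "((\<lambda>x. F x (?\<gamma> t) * circle_deriv_kernel r 0 t) has_field_derivative
        deriv (\<lambda>w. F w (?\<gamma> t)) x * circle_deriv_kernel r 0 t) (at x within ball 0 r)"
      by (intro DERIV_cmult_right holomorphic_derivI[OF hol_fst[OF \<gamma>_in]]) auto
  next
    fix x :: complex assume x: "x \<in> ball 0 r"
    have "continuous_on ?I (\<lambda>t. F x (?\<gamma> t))"
      using x r \<gamma>_in
      by (intro continuous_on_compose2[OF holomorphic_on_imp_continuous_on[OF hol_snd]])
        (auto simp: circlepath intro!: continuous_intros)
    moreover have "continuous_on ?I (circle_deriv_kernel r 0)"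
      using continuous_on_circle_deriv_kernel[of ?I "\<lambda>_. 0" "\<lambda>t. t" r] r by simp
    ultimately show "(\<lambda>t. F x (?\<gamma> t) * circle_deriv_kernel r 0 t) integrable_on ?I"
      by (intro integrable_continuous continuous_on_mult)
  qed auto
  then show ?thesis
    unfolding r_def[symmetric] by (rule holomorphic_transform) (simp add: deriv_snd)
qed

section \<open>Holomorphic functions of several variables\<close>

lemma smult_eq_Re_Im_scaleR: "(\<zeta>::complex) *s (v::complex^'n) = Re \<zeta> *\<^sub>R v + Im \<zeta> *\<^sub>R (\<i> *s v)"
proof -
  have "\<zeta> * x = of_real (Re \<zeta>) * x + of_real (Im \<zeta>) * (\<i> * x)" for x
    by (simp add: complex_eq_iff algebra_simps)
  then show ?thesis
    unfolding vec_eq_iff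
    by (simp only: vector_add_component vector_scaleR_component vector_smult_component)
      (simp add: scaleR_conv_of_real)
qed

lemma scaleR_smult_eq: "t *\<^sub>R (c *s v) = (of_real t * c) *s (v::complex^'n)"
  unfolding vec_eq_iff
  by (simp only: vector_scaleR_component vector_smult_component) (simp add: scaleR_conv_of_real)

lemma has_derivative_line_smult:
  "((\<lambda>\<zeta>::complex. w + \<zeta> *s (v::complex^'n)) has_derivative (\<lambda>h. h *s v)) (at \<zeta>0)"
proof -
  have "((\<lambda>\<zeta>::complex. w + (Re \<zeta> *\<^sub>R v + Im \<zeta> *\<^sub>R (\<i> *s v))) has_derivative
      (\<lambda>h. Re h *\<^sub>R v + Im h *\<^sub>R (\<i> *s v))) (at \<zeta>0)"
    by (auto intro!: derivative_eq_intros)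
  then show ?thesis by (simp only: smult_eq_Re_Im_scaleR[symmetric])
qed

lemma continuous_on_smult_left [continuous_intros]:
  assumes "continuous_on S f"
  shows "continuous_on S (\<lambda>x. f x *s (v::complex^'n))"
proof -
  have "continuous_on S (\<lambda>x. Re (f x) *\<^sub>R v + Im (f x) *\<^sub>R (\<i> *s v))"
    by (intro continuous_intros assms)
  then show ?thesis by (simp only: smult_eq_Re_Im_scaleR[symmetric])
qed

lemma norm_smult_axis_1: "norm ((\<zeta>::complex) *s axis i 1 :: complex^'n) = norm \<zeta>"
proof -
  have "\<zeta> *s axis i 1 = (axis i \<zeta> :: complex^'n)" by (simp add: vec_eq_iff axis_def)
  then show ?thesis by (simp add: norm_eq_sqrt_inner inner_axis_axis)
qed

lemma has_vector_derivative_line: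
  assumes "(f has_derivative L) (at w)"
  shows "((\<lambda>t::real. f (w + t *\<^sub>R v)) has_vector_derivative L v) (at 0)"
proof -
  have "((\<lambda>t::real. w + t *\<^sub>R v) has_derivative (\<lambda>h. h *\<^sub>R v)) (at 0)"
    by (auto intro!: derivative_eq_intros)
  from has_derivative_compose[OF this, of f L] assms
  have "((\<lambda>t::real. f (w + t *\<^sub>R v)) has_derivative (\<lambda>h. L (h *\<^sub>R v))) (at 0)" by simp
  then show ?thesis
    by (simp add: has_vector_derivative_def linear_scale[OF has_derivative_linear[OF assms]])
qed

lemma holo_on_has_derivative:
  assumes "holo_on f U" "w \<in> U"
  shows "(f has_derivative frechet_derivative f (at w)) (at w)"
proof -
  obtain L where "(f has_derivative L) (at w)"
    using assms unfolding holo_on_def by blast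
  then show ?thesis using frechet_derivative_at by metis
qed

lemma holo_on_frechet_derivative_smult:
  assumes "holo_on f U" "w \<in> U"
  shows "frechet_derivative f (at w) (s *s v) = s * frechet_derivative f (at w) v"
proof -
  obtain L where L: "(f has_derivative L) (at w)" "\<forall>(s::complex) v. L (s *s v) = s * L v"
    using assms unfolding holo_on_def by blast
  then show ?thesis using frechet_derivative_at[OF L(1)] by simp
qed

lemma holo_on_imp_continuous_on:
  assumes "holo_on f U" shows "continuous_on U f"
  using has_derivative_continuous[OF holo_on_has_derivative[OF assms]]
  by (blast intro: continuous_at_imp_continuous_on)

lemma holo_on_has_field_derivative_line:
  assumes "holo_on f U" "w + \<zeta>0 *s v \<in> U"
  shows "((\<lambda>\<zeta>. f (w + \<zeta> *s v)) has_field_derivative frechet_derivative f (at (w + \<zeta>0 *s v)) v) (at \<zeta>0)"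
  using has_derivative_compose[OF has_derivative_line_smult holo_on_has_derivative[OF assms]]
  by (simp add: has_field_derivative_def holo_on_frechet_derivative_smult[OF assms] mult_commute_abs)

lemma wirtinger_holo_on:
  fixes f :: "complex^'n \<Rightarrow> complex"
  assumes "holo_on f U" "w \<in> U"
  shows "wirtinger f k w = frechet_derivative f (at w) (axis k 1)"
proof -
  let ?L = "frechet_derivative f (at w)"
  have "axis k \<i> = \<i> *s (axis k 1 :: complex^'n)" by (simp add: vec_eq_iff axis_def)
  then have "dy f k w = \<i> * ?L (axis k 1)"
    unfolding dy_def
    by (simp add: vector_derivative_at[OF has_vector_derivative_line[OF holo_on_has_derivative[OF assms]]]
        holo_on_frechet_derivative_smult[OF assms])
  moreover have "dx f k w = ?L (axis k 1)"
    unfolding dx_def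
    by (rule vector_derivative_at[OF has_vector_derivative_line[OF holo_on_has_derivative[OF assms]]])
  ultimately show ?thesis by (simp add: wirtinger_def field_simps)
qed

lemma holo_on_holomorphic_on_line:
  assumes "holo_on f U" "\<And>\<zeta>. \<zeta> \<in> S \<Longrightarrow> w + \<zeta> *s v \<in> U"
  shows "(\<lambda>\<zeta>. f (w + \<zeta> *s v)) holomorphic_on S"
  unfolding holomorphic_on_def field_differentiable_def
  using holo_on_has_field_derivative_line[OF assms(1) assms(2)] has_field_derivative_at_within by blast

lemma add_smult_axes_in_ball:
  assumes "norm x < e / 2" "norm y < e / 2"
  shows "z + x *s axis i 1 + y *s axis k 1 \<in> ball (z::complex^'n) e"
proof -
  have "norm (x *s axis i 1 + y *s axis k 1 :: complex^'n) < e"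
    using norm_triangle_ineq[of "x *s axis i 1 :: complex^'n" "y *s axis k 1"] assms
    by (simp add: norm_smult_axis_1)
  then show ?thesis
    by (metis add.assoc add_diff_cancel_left' dist_commute dist_norm mem_ball)
qed

lemma holomorphic_on_wirtinger_line:
  fixes g :: "complex^'n \<Rightarrow> complex"
  assumes g: "holo_on g U" and U: "open U" and z: "z \<in> U"
  obtains r where "r > 0" "(\<lambda>\<zeta>. wirtinger g k (z + \<zeta> *s axis i 1)) holomorphic_on ball 0 r"
proof -
  obtain e where e: "e > 0" "ball z e \<subseteq> U" using U z open_contains_ball by blast
  define R where "R = e / 2"
  have R: "R > 0" using e by (simp add: R_def)
  define F where "F = (\<lambda>x y. g (z + x *s axis i 1 + y *s axis k 1))"
  have in_U: "z + x *s axis i 1 + y *s axis k 1 \<in> U" if "x \<in> ball 0 R" "y \<in> ball 0 R" for x y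
    using add_smult_axes_in_ball[of x e y z i k] that e(2) by (auto simp: R_def)
  have "continuous_on (ball 0 R \<times> ball 0 R) (\<lambda>(x, y). F x y)"
    unfolding F_def split_beta
    by (rule continuous_on_compose2[OF holo_on_imp_continuous_on[OF g]])
      (auto intro!: continuous_intros in_U)
  moreover have "F x holomorphic_on ball 0 R" if "x \<in> ball 0 R" for x
    unfolding F_def using in_U[OF that] by (intro holo_on_holomorphic_on_line[OF g])
  moreover have "(\<lambda>x. F x y) holomorphic_on ball 0 R" if "y \<in> ball 0 R" for y
  proof -
    have "(\<lambda>x. g (z + y *s axis k 1 + x *s axis i 1)) holomorphic_on ball 0 R"
      using in_U[OF _ that] by (intro holo_on_holomorphic_on_line[OF g]) (simp add: add_ac)
    moreover have "(\<lambda>x. F x y) = (\<lambda>x. g (z + y *s axis k 1 + x *s axis i 1))"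
      by (simp add: F_def add_ac)
    ultimately show ?thesis by simp
  qed
  ultimately have "(\<lambda>x. deriv (F x) 0) holomorphic_on ball 0 (R/2)"
    by (rule holomorphic_on_deriv_of_separately_holomorphic[OF R])
  moreover have "deriv (F x) 0 = wirtinger g k (z + x *s axis i 1)" if "x \<in> ball 0 (R/2)" for x
  proof -
    have "z + x *s axis i 1 + 0 *s axis k 1 \<in> U" using in_U[of x 0] that R by simp
    from DERIV_imp_deriv[OF holo_on_has_field_derivative_line[OF g this]]
    show ?thesis using wirtinger_holo_on[OF g] in_U[of x 0] that R by (simp add: F_def)
  qed
  ultimately have "(\<lambda>\<zeta>. wirtinger g k (z + \<zeta> *s axis i 1)) holomorphic_on ball 0 (R/2)"
    by (rule holomorphic_transform)
  then show ?thesis using R by (intro that[of "R/2"]) auto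
qed

lemma has_vector_derivative_tilde_line:
  fixes g :: "complex^'n \<Rightarrow> complex"
  assumes D: "\<And>k. ((\<lambda>\<zeta>. wirtinger g k (z + \<zeta> *s axis i 1)) has_field_derivative D k) (at 0)"
  shows "((\<lambda>t. tilde g (z + t *\<^sub>R (c *s axis i 1))) has_vector_derivative
    cnj (wirtinger g i z) * c + cnj c * (\<Sum>k\<in>UNIV. cnj (D k) * z $ k)) (at 0)"
proof -
  define \<phi> where "\<phi> k \<zeta> = wirtinger g k (z + \<zeta> *s axis i 1)" for k \<zeta>
  have "(\<lambda>t. tilde g (z + t *\<^sub>R (c *s axis i 1)))
      = (\<lambda>t. \<Sum>k\<in>UNIV. cnj (\<phi> k (of_real t * c)) * (z $ k + of_real t * (c * axis i 1 $ k)))"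
    unfolding scaleR_smult_eq by (simp add: tilde_def \<phi>_def mult.assoc)
  moreover have coeff: "((\<lambda>t::real. \<phi> k (of_real t * c)) has_vector_derivative D k * c) (at 0)" for k
  proof -
    have "((\<lambda>x. x * c) has_field_derivative c) (at 0)" by (auto intro!: derivative_eq_intros)
    from DERIV_chain2[OF _ this] D[of k]
    have "((\<lambda>x. \<phi> k (x * c)) has_field_derivative D k * c) (at (of_real 0))" by (simp add: \<phi>_def)
    then show ?thesis by (rule has_vector_derivative_real_field)
  qed
  have coord: "((\<lambda>t::real. z $ k + of_real t * (c * axis i 1 $ k)) has_vector_derivative
      c * axis i 1 $ k) (at 0)" for k
    using has_vector_derivative_real_field[of "\<lambda>x. z $ k + x * (c * axis i 1 $ k)"]
    by (auto intro!: derivative_eq_intros)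
  have "((\<lambda>t. \<Sum>k\<in>UNIV. cnj (\<phi> k (of_real t * c)) * (z $ k + of_real t * (c * axis i 1 $ k)))
      has_vector_derivative (\<Sum>k\<in>UNIV. cnj (\<phi> k (of_real 0 * c)) * (c * axis i 1 $ k)
        + cnj (D k * c) * (z $ k + of_real 0 * (c * axis i 1 $ k)))) (at 0)"
    by (intro has_vector_derivative_sum has_vector_derivative_mult has_vector_derivative_cnj coeff coord)
  ultimately have "((\<lambda>t. tilde g (z + t *\<^sub>R (c *s axis i 1))) has_vector_derivative
      (\<Sum>k\<in>UNIV. cnj (\<phi> k 0) * (c * axis i 1 $ k) + cnj (D k * c) * z $ k)) (at 0)"
    by simp
  moreover have "(\<Sum>k\<in>UNIV. cnj (\<phi> k 0) * (c * axis i 1 $ k)) = cnj (wirtinger g i z) * c"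
    by (simp add: \<phi>_def axis_def if_distrib[of "\<lambda>x. _ * (c * x)"] cong: if_cong)
  ultimately show ?thesis
    by (simp add: sum.distrib sum_distrib_left mult_ac)
qed

lemma wirtinger_tilde:
  fixes g :: "complex^'n \<Rightarrow> complex"
  assumes g: "holo_on g U" and U: "open U" and z: "z \<in> U"
  shows "wirtinger (tilde g) i z = cnj (wirtinger g i z)"
proof -
  define S where "S = (\<Sum>k\<in>UNIV. cnj (deriv (\<lambda>\<zeta>. wirtinger g k (z + \<zeta> *s axis i 1)) 0) * z $ k)"
  have "((\<lambda>\<zeta>. wirtinger g k (z + \<zeta> *s axis i 1)) has_field_derivative
      deriv (\<lambda>\<zeta>. wirtinger g k (z + \<zeta> *s axis i 1)) 0) (at 0)" for k
  proof -
    obtain r where "r > 0" "(\<lambda>\<zeta>. wirtinger g k (z + \<zeta> *s axis i 1)) holomorphic_on ball 0 r"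
      using holomorphic_on_wirtinger_line[OF g U z] by metis
    then show ?thesis by (intro holomorphic_derivI[of _ "ball 0 r"]) auto
  qed
  note line_deriv = has_vector_derivative_tilde_line[OF this, folded S_def]
  have "axis i \<i> = \<i> *s (axis i 1 :: complex^'n)" by (simp add: vec_eq_iff axis_def)
  then have dy: "dy (tilde g) i z = cnj (wirtinger g i z) * \<i> - \<i> * S"
    unfolding dy_def using vector_derivative_at[OF line_deriv[of \<i>]] by simp
  have dx: "dx (tilde g) i z = cnj (wirtinger g i z) + S"
    unfolding dx_def using vector_derivative_at[OF line_deriv[of 1]] by simp
  \<comment> \<open>The antilinear contribution S of the antiholomorphic coefficients cancels.\<close>
  show ?thesis
    unfolding wirtinger_def[of "tilde g"] dx dy by (simp add: field_simps)
qed

section \<open>Left kernels of matrices\<close>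

lemma vector_matrix_mult_sum: "(\<Sum>l\<in>A. f l) v* (M::'a::comm_semiring_1^'n^'m) = (\<Sum>l\<in>A. f l v* M)"
  by (simp add: vec_eq_iff vector_matrix_mult_def sum_component sum_distrib_right)
    (rule allI, rule sum.swap)

lemma row_eq_axis_vector_matrix_mult: "row i (P::'a::semiring_1^'n^'m) = axis i 1 v* P"
proof -
  have "(if l = i then 1 else 0) * P $ l $ j = (if l = i then P $ i $ j else 0)" for l j
    by simp
  then show ?thesis by (simp add: vec_eq_iff row_def vector_matrix_mult_def axis_def)
qed

lemma dim_left_kernel_add_rank_le:
  fixes P :: "'a::field^'n^'m"
  shows "vec.dim {u. u v* P = 0} + rank P \<le> CARD('m)"
proof -
  let ?K = "{u. u v* P = 0}" and ?f = "\<lambda>u. u v* P"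
  obtain B where B: "B \<subseteq> ?K" "vec.independent B" "?K \<subseteq> vec.span B" "card B = vec.dim ?K"
    using vec.basis_exists by blast
  obtain C where C: "B \<subseteq> C" "vec.independent C" "UNIV \<subseteq> vec.span C"
    by (rule vec.maximal_independent_subset_extend[OF subset_UNIV B(2)]) simp
  have fin_C: "finite C" using vec.finiteI_independent[OF C(2)] .
  have card_C: "card C = CARD('m)"
    using vec.basis_card_eq_dim[of C UNIV] C vec_dim_card by auto
  \<comment> \<open>The images of a basis extension of the kernel span the row space.\<close>
  have "?f u \<in> vec.span (?f ` (C - B))" for u
    using C(3)[THEN subsetD, OF UNIV_I]
  proof (rule vec.span_induct)
    show "vec.subspace {u. ?f u \<in> vec.span (?f ` (C - B))}"
      unfolding vec.subspace_def
      by (auto simp: vector_matrix_left_distrib scalar_vector_matrix_assoc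
          intro: vec.span_add vec.span_scale vec.span_zero)
  next
    fix x assume "x \<in> C"
    then show "?f x \<in> vec.span (?f ` (C - B))"
    proof (cases "x \<in> B")
      case True
      then have "?f x = 0" using B(1) by blast
      then show ?thesis by (simp add: vec.span_zero)
    qed (auto intro: vec.span_base)
  qed
  then have "rows P \<subseteq> vec.span (?f ` (C - B))"
    by (auto simp: rows_def row_eq_axis_vector_matrix_mult)
  then have "rank P \<le> card (?f ` (C - B))"
    unfolding row_rank_def_gen using fin_C by (intro vec.dim_le_card) auto
  also have "\<dots> \<le> card C - card B"
    using fin_C C(1) card_image_le[of "C - B" ?f] by (simp add: card_Diff_subset finite_subset)
  finally show ?thesis using B(4) card_C card_mono[OF fin_C C(1)] by linarith
qed

lemma vec_span_image_finite:
  assumes "finite A"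
  shows "vec.span (f ` A) = range (\<lambda>a. \<Sum>m\<in>A. a m *s f m)"
proof
  show "range (\<lambda>a. \<Sum>m\<in>A. a m *s f m) \<subseteq> vec.span (f ` A)"
    by (auto intro!: vec.span_sum vec.span_scale intro: vec.span_base)
next
  show "vec.span (f ` A) \<subseteq> range (\<lambda>a. \<Sum>m\<in>A. a m *s f m)"
  proof
    fix x assume "x \<in> vec.span (f ` A)"
    then show "x \<in> range (\<lambda>a. \<Sum>m\<in>A. a m *s f m)"
    proof (induction rule: vec.span_induct_alt)
      case base
      show ?case by (rule range_eqI[where x="\<lambda>_. 0"]) simp
    next
      case (step c x y)
      then obtain m0 a where "m0 \<in> A" "x = f m0" "y = (\<Sum>m\<in>A. a m *s f m)" by blast
      then have "c *s x + y = (\<Sum>m\<in>A. (a m + (if m = m0 then c else 0)) *s f m)"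
        using assms by (simp add: vector_sadd_rdistrib sum.distrib if_distrib[of "\<lambda>b. b *s _"]
            cong: if_cong)
      then show ?case by (rule range_eqI[where x="\<lambda>m. a m + (if m = m0 then c else 0)"])
    qed
  qed
qed

lemma left_kernel_eq_span:
  fixes P :: "'a::field^'n^'m" and G :: "nat \<Rightarrow> 'a^'m"
  assumes ker: "\<And>m. m < r \<Longrightarrow> G m v* P = 0"
    and indep: "\<And>a. (\<Sum>m<r. a m *s G m) = 0 \<Longrightarrow> \<forall>m<r. a m = 0"
    and rank: "CARD('m) \<le> r + rank P"
  shows "{u. u v* P = 0} = vec.span (G ` {..<r})"
proof
  have inj: "inj_on G {..<r}"
  proof (rule inj_onI, rule ccontr)
    fix p q assume pq: "p \<in> {..<r}" "q \<in> {..<r}" "G p = G q" "p \<noteq> q"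
    define a :: "nat \<Rightarrow> 'a" where "a m = (if m = p then 1 else if m = q then -1 else 0)" for m
    have "(\<Sum>m<r. a m *s G m) = G p - G q"
      using pq by (simp add: a_def if_distrib[of "\<lambda>b. b *s _"] sum.If_cases Int_absorb2 cong: if_cong)
    then have "a p = 0" using indep[of a] pq by simp
    then show False by (simp add: a_def)
  qed
  have "vec.independent (G ` {..<r})"
  proof
    assume "vec.dependent (G ` {..<r})"
    then obtain u where u: "\<exists>v\<in>G ` {..<r}. u v \<noteq> 0" "(\<Sum>v\<in>G ` {..<r}. u v *s v) = 0"
      using vec.dependent_finite[of "G ` {..<r}"] by auto
    then have "\<forall>m<r. u (G m) = 0" using indep[of "u \<circ> G"] by (simp add: sum.reindex[OF inj])
    then show False using u(1) by auto
  qed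
  moreover have "vec.dim {u. u v* P = 0} \<le> card (G ` {..<r})"
    using dim_left_kernel_add_rank_le[of P] rank card_image[OF inj] by simp
  moreover have "G ` {..<r} \<subseteq> {u. u v* P = 0}" using ker by auto
  ultimately show "{u. u v* P = 0} \<subseteq> vec.span (G ` {..<r})"
    by (intro vec.card_ge_dim_independent)
next
  have "vec.subspace {u. u v* P = 0}"
    using vec.subspace_kernel[of "transpose P"] by simp
  then show "vec.span (G ` {..<r}) \<subseteq> {u. u v* P = 0}"
    using ker by (intro vec.span_minimal) auto
qed

section \<open>The (1,0)-tangent space of the orbit\<close>

definition cnj_mat :: "complex^'n^'m \<Rightarrow> complex^'n^'m" where
  "cnj_mat M = (\<chi> i j. cnj (M $ i $ j))"

definition complex_vec :: "real^'n \<Rightarrow> complex^'n" where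
  "complex_vec X = (\<chi> i. complex_of_real (X $ i))"

lemma cnj_vec_cnj_vec [simp]: "cnj_vec (cnj_vec x) = x"
  by (simp add: vec_eq_iff cnj_vec_def)

lemma cnj_mat_cnj_mat [simp]: "cnj_mat (cnj_mat M) = M"
  by (simp add: vec_eq_iff cnj_mat_def)

lemma cnj_vec_complex_vec [simp]: "cnj_vec (complex_vec X) = complex_vec X"
  by (simp add: vec_eq_iff cnj_vec_def complex_vec_def)

lemma cnj_vec_sum: "cnj_vec (\<Sum>l\<in>A. f l) = (\<Sum>l\<in>A. cnj_vec (f l))"
  by (simp add: vec_eq_iff cnj_vec_def sum_component cnj_sum)

lemma cnj_vec_smult: "cnj_vec (a *s x) = cnj a *s cnj_vec x"
  by (simp add: vec_eq_iff cnj_vec_def)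

lemma cnj_vec_vector_matrix_mult: "cnj_vec (x v* M) = cnj_vec x v* cnj_mat M"
  by (simp add: vec_eq_iff cnj_vec_def vector_matrix_mult_def cnj_mat_def cnj_sum)

lemma cnj_vec_zero [simp]: "cnj_vec 0 = 0"
  by (simp add: vec_eq_iff cnj_vec_def)

lemma cnj_image_span:
  fixes P :: "complex^'n^'m"
  assumes "finite A"
  shows "(\<lambda>u. cnj_vec u v* P) ` vec.span (G ` A) = vec.span ((\<lambda>m. cnj_vec (G m) v* P) ` A)"
proof -
  have "cnj_vec (\<Sum>m\<in>A. a m *s G m) v* P = (\<Sum>m\<in>A. cnj (a m) *s (cnj_vec (G m) v* P))" for a
    by (simp add: cnj_vec_sum cnj_vec_smult vector_matrix_mult_sum scalar_vector_matrix_assoc)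
  then have "(\<lambda>u. cnj_vec u v* P) ` vec.span (G ` A)
      = range (\<lambda>a. \<Sum>m\<in>A. cnj (a m) *s (cnj_vec (G m) v* P))"
    by (simp add: vec_span_image_finite[OF assms] image_image)
  also have "\<dots> = range (\<lambda>b. \<Sum>m\<in>A. b m *s (cnj_vec (G m) v* P))"
    by (auto intro: range_eqI[where x="\<lambda>m. cnj (_ m)"])
  finally show ?thesis by (simp add: vec_span_image_finite[OF assms])
qed

lemma complexified_real_image_zero_part:
  fixes P :: "complex^'n^'m"
  assumes "(a, 0) \<in> complexified (range (\<lambda>X. complex_vec X v* P))"
  shows "a \<in> (\<lambda>u. cnj_vec u v* P) ` {u. u v* P = 0}"
proof -
  from assms have "\<exists>(k::nat) b w. (a, 0) = (\<Sum>l<k. b l *s w l, \<Sum>l<k. b l *s cnj_vec (w l))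
      \<and> (\<forall>l<k. w l \<in> range (\<lambda>X. complex_vec X v* P))"
    unfolding complexified_def by (simp only: mem_Collect_eq)
  then obtain k :: nat and b w where "(a, 0) = (\<Sum>l<k. b l *s w l, \<Sum>l<k. b l *s cnj_vec (w l))"
    and w: "\<forall>l<k. w l \<in> range (\<lambda>X. complex_vec X v* P)"
    by blast
  then have a: "a = (\<Sum>l<k. b l *s w l)" and im: "(\<Sum>l<k. b l *s cnj_vec (w l)) = 0"
    by simp_all
  define X where "X l = inv (\<lambda>X. complex_vec X v* P) (w l)" for l
  have X: "w l = complex_vec (X l) v* P" if "l < k" for l
    using f_inv_into_f[OF w[rule_format, OF that]] by (simp add: X_def)
  define Y where "Y = (\<Sum>l<k. b l *s complex_vec (X l))"
  have "a = Y v* P"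
    by (simp add: a Y_def X vector_matrix_mult_sum scalar_vector_matrix_assoc)
  moreover have "Y v* cnj_mat P = 0"
    using im by (simp add: Y_def X vector_matrix_mult_sum scalar_vector_matrix_assoc
        cnj_vec_vector_matrix_mult)
  then have "cnj_vec Y v* P = 0"
    using cnj_vec_vector_matrix_mult[of Y "cnj_mat P"] by simp
  ultimately show ?thesis
    by (intro image_eqI[of _ _ "cnj_vec Y"]) auto
qed

lemma cnj_left_kernel_in_complexified:
  fixes P :: "complex^'n^'m"
  assumes u: "u v* P = 0"
  shows "(cnj_vec u v* P, 0) \<in> complexified (range (\<lambda>X. complex_vec X v* P))"
proof -
  define X0 where "X0 = (\<chi> i. Re (cnj (u $ i)))"
  define X1 where "X1 = (\<chi> i. Im (cnj (u $ i)))"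
  define b where "b l = (if l = 0 then 1 else \<i>)" for l :: nat
  define w where "w l = complex_vec (if l = 0 then X0 else X1) v* P" for l :: nat
  have Y: "cnj_vec u = complex_vec X0 + \<i> *s complex_vec X1"
    by (simp add: vec_eq_iff cnj_vec_def complex_vec_def X0_def X1_def complex_eq_iff)
  have "(\<Sum>l<2. b l *s w l) = cnj_vec u v* P"
    by (simp add: numeral_2_eq_2 b_def w_def Y vector_matrix_left_distrib scalar_vector_matrix_assoc)
  moreover have "(\<Sum>l<2. b l *s cnj_vec (w l)) = cnj_vec (u v* P)"
    by (simp add: numeral_2_eq_2 b_def w_def Y cnj_vec_vector_matrix_mult vector_matrix_left_distrib
        scalar_vector_matrix_assoc)
  ultimately have "(cnj_vec u v* P, 0) = (\<Sum>l<2. b l *s w l, \<Sum>l<2. b l *s cnj_vec (w l))"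
    using u by simp
  moreover have "\<forall>l<2. w l \<in> range (\<lambda>X. complex_vec X v* P)" by (simp add: w_def)
  ultimately show ?thesis
    unfolding complexified_def by blast
qed

lemma orbit_tangent_eq: "orbit_tangent c z = range (\<lambda>X. complex_vec X v* poisson_matrix c z)"
proof -
  have "coad c X z = complex_vec (- X) v* poisson_matrix c z" for X
    by (simp add: vec_eq_iff coad_def vector_matrix_mult_def poisson_matrix_def complex_vec_def
        sum_distrib_left sum_distrib_right sum_negf mult_ac)
  then show ?thesis
    unfolding orbit_tangent_def by auto (metis minus_minus)
qed

lemma T10_orbit_eq:
  "T10_orbit c z = (\<lambda>u. cnj_vec u v* poisson_matrix c z) ` {u. u v* poisson_matrix c z = 0}"
  unfolding T10_orbit_def orbit_tangent_eq
  using complexified_real_image_zero_part cnj_left_kernel_in_complexified by blast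

definition complex_gradient :: "(complex^'n \<Rightarrow> complex) \<Rightarrow> complex^'n \<Rightarrow> complex^'n" where
  "complex_gradient f z = (\<chi> i. wirtinger f i z)"

lemma hamfield_eq: "hamfield c f z = complex_gradient f z v* poisson_matrix c z"
  by (simp add: vec_eq_iff hamfield_def complex_gradient_def vector_matrix_mult_def
      poisson_matrix_def sum_distrib_left sum_distrib_right mult_ac)

lemma complex_gradient_tilde:
  assumes "holo_on g U" "open U" "z \<in> U"
  shows "complex_gradient (tilde g) z = cnj_vec (complex_gradient g z)"
  using wirtinger_tilde[OF assms] by (simp add: vec_eq_iff complex_gradient_def cnj_vec_def)

lemma frechet_derivative_holo_on_eq:
  assumes "holo_on f U" "w \<in> U"
  shows "frechet_derivative f (at w) v = (\<Sum>i\<in>UNIV. v $ i * complex_gradient f w $ i)"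
proof -
  let ?L = "frechet_derivative f (at w)"
  have "?L v = ?L (\<Sum>i\<in>UNIV. v $ i *s axis i 1)" by (simp add: basis_expansion)
  also have "\<dots> = (\<Sum>i\<in>UNIV. ?L (v $ i *s axis i 1))"
    by (rule linear_sum[OF has_derivative_linear[OF holo_on_has_derivative[OF assms]]])
  also have "\<dots> = (\<Sum>i\<in>UNIV. v $ i * complex_gradient f w $ i)"
    by (simp add: holo_on_frechet_derivative_smult[OF assms] wirtinger_holo_on[OF assms]
        complex_gradient_def)
  finally show ?thesis .
qed

lemma complex_gradients_independent:
  assumes holo: "\<And>m. m < r \<Longrightarrow> holo_on (g m) U" and z: "z \<in> U"
    and indep: "\<forall>a :: nat \<Rightarrow> complex.
      (\<forall>v. (\<Sum>m<r. a m * frechet_derivative (g m) (at z) v) = 0) \<longrightarrow> (\<forall>m < r. a m = 0)"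
    and a: "(\<Sum>m<r. a m *s complex_gradient (g m) z) = 0"
  shows "\<forall>m<r. a m = 0"
proof -
  have "(\<Sum>m<r. a m * frechet_derivative (g m) (at z) v) = 0" for v
  proof -
    have "(\<Sum>m<r. a m * frechet_derivative (g m) (at z) v)
        = (\<Sum>m<r. a m * (\<Sum>i\<in>UNIV. v $ i * complex_gradient (g m) z $ i))"
      by (rule sum.cong) (auto simp: frechet_derivative_holo_on_eq[OF holo z])
    also have "\<dots> = (\<Sum>i\<in>UNIV. v $ i * (\<Sum>m<r. a m *s complex_gradient (g m) z) $ i)"
      by (simp add: sum_component sum_distrib_left mult_ac) (rule sum.swap)
    finally show ?thesis using a by simp
  qed
  then show ?thesis using indep by blast
qed

theorem mainTheorem17:
  fixes c :: "'n::finite \<Rightarrow> 'n \<Rightarrow> 'n \<Rightarrow> real"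
    and z0 :: "complex^'n" and U :: "(complex^'n) set"
    and g :: "nat \<Rightarrow> complex^'n \<Rightarrow> complex"
  assumes lie: "lie_structure_constants c"
    and nonab: "nonabelian c"
    and z0_reg: "z0 \<notin> Sing c"
    and U_open: "open U" and z0_U: "z0 \<in> U" and U_reg: "U \<inter> Sing c = {}"
    and holo: "\<forall>m < lie_rank c. holo_on (g m) U"
    and casimir: "\<forall>m < lie_rank c. \<forall>z\<in>U. hamfield c (g m) z = 0"
    and indep: "\<forall>z\<in>U. \<forall>a :: nat \<Rightarrow> complex.
                  (\<forall>v. (\<Sum>m<lie_rank c. a m * frechet_derivative (g m) (at z) v) = 0)
                  \<longrightarrow> (\<forall>m < lie_rank c. a m = 0)"
  shows "\<forall>z \<in> coadjoint_orbit c z0 \<inter> U.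
           T10_orbit c z = vec.span {hamfield c (tilde (g m)) z | m. m < lie_rank c}"
proof
  fix z assume "z \<in> coadjoint_orbit c z0 \<inter> U"
  then have z: "z \<in> U" by blast
  define r where "r = lie_rank c"
  define P where "P = poisson_matrix c z"
  define G where "G m = complex_gradient (g m) z" for m
  have "CARD('n) \<le> r + rank P"
    using U_reg z by (auto simp: r_def P_def lie_rank_def Sing_def)
  then have "{u. u v* P = 0} = vec.span (G ` {..<r})"
    using casimir z complex_gradients_independent[of r g U z] holo indep
    by (intro left_kernel_eq_span) (auto simp: G_def P_def r_def hamfield_eq)
  then have "T10_orbit c z = vec.span ((\<lambda>m. cnj_vec (G m) v* P) ` {..<r})"
    by (simp add: T10_orbit_eq cnj_image_span P_def)
  also have "(\<lambda>m. cnj_vec (G m) v* P) ` {..<r} = {hamfield c (tilde (g m)) z | m. m < r}"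
  proof -
    have "hamfield c (tilde (g m)) z = cnj_vec (G m) v* P" if "m < r" for m
      using holo that complex_gradient_tilde[OF _ U_open z]
      by (simp add: G_def P_def r_def hamfield_eq)
    then show ?thesis by force
  qed
  finally show "T10_orbit c z = vec.span {hamfield c (tilde (g m)) z | m. m < lie_rank c}"
    by (simp add: r_def)
qed

end
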